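(* Let $R$ be a GCD-domain. Let $s_1,\dots,s_n\in(\operatorname{Sqf} R)\setminus R^{\ast}$ and $t_1,\dots,t_m\in(\operatorname{Sqf} R)\setminus R^{\ast}$ (with $n,m\geqslant 1$), let $k_1<k_2<\dots<k_n$ and $l_1<l_2<\dots<l_m$ be non-negative integers, and let $c,d\in R^{\ast}$. If $$c\,s_n^{2^{k_n}}s_{n-1}^{2^{k_{n-1}}}\cdots s_2^{2^{k_2}}s_1^{2^{k_1}}=d\,t_m^{2^{l_m}}t_{m-1}^{2^{l_{m-1}}}\cdots t_2^{2^{l_2}}t_1^{2^{l_1}},$$ then $n=m$, and $s_i\sim t_i$ and $k_i=l_i$ for $i=1,\dots,n$.
   Context: A GCD-domain is a commutative ring with identity without zero divisors in which the intersection of any two principal ideals is principal. $R^{\ast}$ denotes the set of invertible elements of $R$; $a\sim b$ means $a$ and $b$ are associated. An element $a\in R$ is square-free if it cannot be written as $a=b^2c$ with $b\in R\setminus R^{\ast}$ and $c\in R$; $\operatorname{Sqf} R$ denotes the set of square-free elements of $R$. *)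

theory Defs
  imports Main
begin

text \<open>A GCD-domain: an integral domain in which the intersection of any two
principal ideals is principal, i.e. for all a b there is c with aR \<inter> bR = cR.\<close>
definition gcd_domain :: "'a::idom itself \<Rightarrow> bool" where
  "gcd_domain _ \<longleftrightarrow>
     (\<forall>a b :: 'a. \<exists>c. \<forall>x. (a dvd x \<and> b dvd x) \<longleftrightarrow> c dvd x)"

definition sqf :: "'a::idom \<Rightarrow> bool" where
  "sqf a \<longleftrightarrow> \<not> (\<exists>b c. \<not> b dvd 1 \<and> a = b ^ 2 * c)"

definition associated :: "'a::idom \<Rightarrow> 'a \<Rightarrow> bool" where
  "associated a b \<longleftrightarrow> a dvd b \<and> b dvd a"

end

theory Submission
  imports Defs
begin

text \<open>Each side has the form \<open>(s * Q\<^sup>2) ^ 2 ^ k\<close>, where \<open>s\<close> is the factor with the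
  smallest exponent \<open>k\<close> and \<open>Q\<close> collects the other factors with their exponents lowered
  by \<open>k + 1\<close>. In a GCD-domain, \<open>s * B\<^sup>2 \<sim> t * D\<^sup>2\<close> with \<open>s\<close>, \<open>t\<close> square-free forces
  \<open>B \<sim> D\<close> and \<open>s \<sim> t\<close>: after cancelling a gcd of \<open>B\<close> and \<open>D\<close>, the coprime part \<open>B'\<close>
  with \<open>B'\<^sup>2 dvd t * D'\<^sup>2\<close> divides \<open>t\<close> twice, so it is a unit. For \<open>s = t = 1\<close> this makes
  \<open>2\<^sup>k\<close>-th roots unique up to units. Hence the smallest exponents agree (otherwise the
  non-unit \<open>s\<close> would be associated to a square), the leading factors are associated,
  and induction on the number of factors applied to the two \<open>Q\<close>'s finishes.\<close>

text \<open>The library's \<open>coprime\<close> lives in \<open>algebraic_semidom\<close>, which \<open>idom\<close> does not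
  extend.\<close>
definition relatively_prime :: "'a::comm_semiring_1 \<Rightarrow> 'a \<Rightarrow> bool" where
  "relatively_prime a b \<longleftrightarrow> (\<forall>h. h dvd a \<longrightarrow> h dvd b \<longrightarrow> h dvd 1)"

lemma relatively_primeI: "(\<And>h. h dvd a \<Longrightarrow> h dvd b \<Longrightarrow> h dvd 1) \<Longrightarrow> relatively_prime a b"
  by (simp add: relatively_prime_def)

lemma relatively_primeD: "relatively_prime a b \<Longrightarrow> h dvd a \<Longrightarrow> h dvd b \<Longrightarrow> h dvd 1"
  by (simp add: relatively_prime_def)

lemma relatively_prime_commute: "relatively_prime a b \<longleftrightarrow> relatively_prime b a"
  by (auto simp: relatively_prime_def)

lemma associated_refl: "associated a a"
  by (simp add: associated_def)

lemma associated_sym: "associated a b \<Longrightarrow> associated b a"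
  by (simp add: associated_def)

lemma associated_trans: "associated a b \<Longrightarrow> associated b c \<Longrightarrow> associated a c"
  unfolding associated_def by (blast intro: dvd_trans)

lemma associated_mult: "associated a b \<Longrightarrow> associated c d \<Longrightarrow> associated (a * c) (b * d)"
  unfolding associated_def by (blast intro: mult_dvd_mono)

lemma associated_power: "associated a b \<Longrightarrow> associated (a ^ n) (b ^ n)"
  unfolding associated_def by (blast intro: dvd_power_same)

lemma associated_mult_cancel_right:
  "(c::'a::idom) \<noteq> 0 \<Longrightarrow> associated (a * c) (b * c) \<Longrightarrow> associated a b"
  unfolding associated_def by simp

lemma dvd_unit_mult_cancel:
  assumes "(u::'a::comm_semiring_1) dvd 1" and "a dvd u * c"
  shows "a dvd c"
proof -
  obtain v where "1 = u * v"
    using assms(1) by (rule dvdE)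
  then have "c = u * c * v"
    by (simp add: ac_simps)
  then show ?thesis
    using assms(2) by (metis dvd_mult2)
qed

lemma associated_unit_mult: "(u::'a::idom) dvd 1 \<Longrightarrow> associated (u * a) a"
  unfolding associated_def by (auto intro: dvd_unit_mult_cancel)

lemma associated_units: "a dvd 1 \<Longrightarrow> b dvd 1 \<Longrightarrow> associated a b"
  unfolding associated_def by (meson dvd_trans one_dvd)

lemma associated_is_unit: "associated a b \<Longrightarrow> a dvd 1 \<Longrightarrow> b dvd 1"
  unfolding associated_def by (rule dvd_trans) auto

lemma sqf_nonzero: "sqf (a::'a::idom) \<Longrightarrow> a \<noteq> 0"
  unfolding sqf_def by (metis dvd_0_left_iff mult_zero_right zero_neq_one)

lemma sqf_1: "sqf (1::'a::idom)"
  unfolding sqf_def by (metis dvd_triv_left mult.assoc power2_eq_square)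

lemma gcd_domain_lcmE:
  fixes a b :: "'a::idom"
  assumes "gcd_domain TYPE('a)" and "a \<noteq> 0" and "b \<noteq> 0"
  obtains L g v u where "\<And>x. a dvd x \<and> b dvd x \<longleftrightarrow> L dvd x"
    and "a = g * v" and "b = g * u" and "L = a * u"
proof -
  obtain L where L: "\<And>x. a dvd x \<and> b dvd x \<longleftrightarrow> L dvd x"
    using assms unfolding gcd_domain_def by blast
  obtain g where g: "a * b = L * g"
    using L[of "a * b"] by (auto elim: dvdE)
  obtain u where u: "L = a * u" and "b dvd L"
    using L[of L] by (auto elim: dvdE)
  then obtain v where v: "L = b * v"
    by (auto elim: dvdE)
  have "b = g * u"
    using g u assms(2) by (simp add: ac_simps)
  moreover have "a = g * v"
    using g v assms(3) by (simp add: ac_simps)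
  ultimately show thesis
    using that[OF L _ _ u] by blast
qed

lemma gcd_domain_relatively_prime_factorization:
  fixes a b :: "'a::idom"
  assumes "gcd_domain TYPE('a)" and "a \<noteq> 0" and "b \<noteq> 0"
  obtains g a' b' where "a = g * a'" and "b = g * b'" and "relatively_prime a' b'"
proof -
  obtain L g v u where L: "\<And>x. a dvd x \<and> b dvd x \<longleftrightarrow> L dvd x"
    and v: "a = g * v" and u: "b = g * u" and Lu: "L = a * u"
    using gcd_domain_lcmE[OF assms] by metis
  have "L \<noteq> 0"
    using Lu u assms(2,3) by auto
  have "relatively_prime v u"
  proof (rule relatively_primeI)
    fix h assume "h dvd v" and "h dvd u"
    then obtain v' u' where v': "v = h * v'" and u': "u = h * u'"
      by (meson dvdE)
    \<comment> \<open>\<open>g * h * v' * u'\<close> is a common multiple of \<open>a\<close> and \<open>b\<close>, yet \<open>L\<close> is \<open>h\<close> times it\<close>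
    have "g * h * v' * u' = a * u'" "g * h * v' * u' = b * v'"
      using u u' v v' by (simp_all add: ac_simps)
    then have "L dvd g * h * v' * u'"
      using L[of "g * h * v' * u'"] by (metis dvd_triv_left)
    then obtain w where w: "g * h * v' * u' = L * w"
      by (rule dvdE)
    have "L = h * (g * h * v' * u')"
      using Lu v v' u' by (simp add: ac_simps)
    then have "L * 1 = L * (h * w)"
      using w by (simp add: ac_simps)
    then have "1 = h * w"
      using \<open>L \<noteq> 0\<close> by simp
    then show "h dvd 1"
      by (rule dvdI)
  qed
  with v u show thesis
    by (rule that)
qed

lemma gcd_domain_relatively_prime_dvd_mult:
  fixes a b c :: "'a::idom"
  assumes G: "gcd_domain TYPE('a)" and "relatively_prime a b" and "a dvd b * c"
  shows "a dvd c"
proof (cases "a = 0 \<or> b = 0")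
  case True
  then show ?thesis
  proof
    assume "a = 0"
    then have "b dvd 1"
      using relatively_primeD[OF assms(2)] by simp
    then show ?thesis
      using assms(3) by (rule dvd_unit_mult_cancel)
  next
    assume "b = 0"
    then have "a dvd 1"
      using relatively_primeD[OF assms(2)] by simp
    then show ?thesis
      using one_dvd by (rule dvd_trans)
  qed
next
  case False
  then have "a \<noteq> 0" and "b \<noteq> 0"
    by simp_all
  obtain L g v u where L: "\<And>x. a dvd x \<and> b dvd x \<longleftrightarrow> L dvd x"
    and v: "a = g * v" and u: "b = g * u" and Lu: "L = a * u"
    using gcd_domain_lcmE[OF G \<open>a \<noteq> 0\<close> \<open>b \<noteq> 0\<close>] by metis
  have "g dvd 1"
    using relatively_primeD[OF assms(2)] v u by simp
  obtain w where w: "b * c = L * w"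
    using L[of "b * c"] assms(3) by (meson dvdE dvd_triv_left)
  have "b * (c * g) = (L * w) * g"
    using w by (simp add: ac_simps)
  also have "\<dots> = b * (a * w)"
    using Lu u by (simp add: ac_simps)
  finally have "a * w = c * g"
    using False by simp
  then have "a dvd g * c"
    by (metis dvdI mult.commute)
  with \<open>g dvd 1\<close> show ?thesis
    by (rule dvd_unit_mult_cancel)
qed

lemma gcd_domain_relatively_prime_square_dvd_sqf_mult_square:
  fixes B D t :: "'a::idom"
  assumes G: "gcd_domain TYPE('a)" and "relatively_prime B D" and "sqf t" and "B\<^sup>2 dvd t * D\<^sup>2"
  shows "B dvd 1"
proof -
  have dvd_of_dvd_mult_square: "B dvd x" if "B dvd x * D\<^sup>2" for x
  proof -
    have "B dvd D * (D * x)"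
      using that by (simp add: power2_eq_square ac_simps)
    then show ?thesis
      using gcd_domain_relatively_prime_dvd_mult[OF G \<open>relatively_prime B D\<close>] by blast
  qed
  have "B \<noteq> 0"
  proof
    assume "B = 0"
    then have "D dvd 1"
      using relatively_primeD[OF assms(2)] by simp
    then have "t = 0"
      using \<open>B = 0\<close> assms(4) by auto
    with sqf_nonzero[OF assms(3)] show False ..
  qed
  have "B dvd t * D\<^sup>2"
    by (rule dvd_trans[OF _ assms(4)]) (simp add: power2_eq_square)
  then have "B dvd t"
    by (rule dvd_of_dvd_mult_square)
  then obtain t1 where t1: "t = B * t1"
    by (rule dvdE)
  have "B * B dvd B * (t1 * D\<^sup>2)"
    using assms(4) t1 by (simp add: power2_eq_square ac_simps)
  then have "B dvd t1"
    using \<open>B \<noteq> 0\<close> by (auto intro: dvd_of_dvd_mult_square)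
  then obtain t2 where "t1 = B * t2"
    by (rule dvdE)
  then have "t = B\<^sup>2 * t2"
    using t1 by (simp add: power2_eq_square ac_simps)
  then show ?thesis
    using \<open>sqf t\<close> unfolding sqf_def by blast
qed

lemma gcd_domain_sqf_mult_square_associated:
  fixes s t B D :: "'a::idom"
  assumes G: "gcd_domain TYPE('a)" and "sqf s" and "sqf t" and "B \<noteq> 0" and "D \<noteq> 0"
    and "associated (s * B\<^sup>2) (t * D\<^sup>2)"
  shows "associated B D \<and> associated s t"
proof -
  obtain g B' D' where B: "B = g * B'" and D: "D = g * D'" and "relatively_prime B' D'"
    using gcd_domain_relatively_prime_factorization[OF G \<open>B \<noteq> 0\<close> \<open>D \<noteq> 0\<close>] .
  have "g \<noteq> 0"
    using B \<open>B \<noteq> 0\<close> by auto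
  have "associated ((s * B'\<^sup>2) * g\<^sup>2) ((t * D'\<^sup>2) * g\<^sup>2)"
    using assms(6) B D by (simp add: power_mult_distrib ac_simps)
  then have "associated (s * B'\<^sup>2) (t * D'\<^sup>2)"
    by (rule associated_mult_cancel_right[rotated]) (simp add: \<open>g \<noteq> 0\<close>)
  then have "s * B'\<^sup>2 dvd t * D'\<^sup>2" and "t * D'\<^sup>2 dvd s * B'\<^sup>2"
    unfolding associated_def by simp_all
  then have "B'\<^sup>2 dvd t * D'\<^sup>2" and "D'\<^sup>2 dvd s * B'\<^sup>2"
    by (auto dest: dvd_mult_right)
  then have "B' dvd 1" "D' dvd 1"
    using gcd_domain_relatively_prime_square_dvd_sqf_mult_square[OF G] \<open>relatively_prime B' D'\<close>
      assms(2,3) relatively_prime_commute by blast+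
  then have BD: "associated B D"
    using B D associated_mult[OF associated_refl associated_units] by simp
  have "associated (t * D\<^sup>2) (t * B\<^sup>2)"
    using associated_mult[OF associated_refl associated_power[OF associated_sym[OF BD]]] .
  then have "associated (s * B\<^sup>2) (t * B\<^sup>2)"
    using assms(6) associated_trans by blast
  then show ?thesis
    using BD \<open>B \<noteq> 0\<close> associated_mult_cancel_right[of "B\<^sup>2" s t] by simp
qed

lemma gcd_domain_associated_two_power_root:
  fixes x y :: "'a::idom"
  assumes G: "gcd_domain TYPE('a)" and "x \<noteq> 0" and "y \<noteq> 0"
    and "associated (x ^ 2 ^ k) (y ^ 2 ^ k)"
  shows "associated x y"
  using assms(2-4)
proof (induction k arbitrary: x y)
  case 0
  then show ?case by simp
next
  case (Suc k)
  have "associated ((x\<^sup>2) ^ 2 ^ k) ((y\<^sup>2) ^ 2 ^ k)"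
    using Suc.prems(3) by (simp add: power_mult[symmetric])
  then have "associated (1 * x\<^sup>2) (1 * y\<^sup>2)"
    using Suc by simp
  then show ?case
    using gcd_domain_sqf_mult_square_associated[OF G sqf_1 sqf_1] Suc.prems by blast
qed

lemma gcd_domain_sqf_square_two_power_less_not_associated:
  fixes x X z :: "'a::idom"
  assumes G: "gcd_domain TYPE('a)" and "sqf x" and "\<not> x dvd 1" and "X \<noteq> 0" and "z \<noteq> 0"
    and "a < b"
  shows "\<not> associated ((x * X\<^sup>2) ^ 2 ^ a) (z ^ 2 ^ b)"
proof
  assume assoc: "associated ((x * X\<^sup>2) ^ 2 ^ a) (z ^ 2 ^ b)"
  \<comment> \<open>since \<open>a < b\<close>, the right-hand side is the \<open>2\<^sup>a\<close>-th power of a square\<close>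
  define Y where "Y = z ^ 2 ^ (b - a - 1)"
  have "(2::nat) ^ b = 2 ^ ((b - a - 1) + 1 + a)"
    using \<open>a < b\<close> by simp
  then have "(2::nat) ^ b = 2 ^ (b - a - 1) * 2 * 2 ^ a"
    by (simp only: power_add power_one_right)
  then have "z ^ 2 ^ b = (1 * Y\<^sup>2) ^ 2 ^ a"
    unfolding Y_def by (simp add: power_mult)
  moreover have "x * X\<^sup>2 \<noteq> 0" "Y \<noteq> 0"
    using sqf_nonzero[OF \<open>sqf x\<close>] \<open>X \<noteq> 0\<close> \<open>z \<noteq> 0\<close> by (simp_all add: Y_def)
  ultimately have "associated (x * X\<^sup>2) (1 * Y\<^sup>2)"
    using gcd_domain_associated_two_power_root[OF G] assoc by simp
  then have "associated x 1"
    using gcd_domain_sqf_mult_square_associated[OF G \<open>sqf x\<close> sqf_1 \<open>X \<noteq> 0\<close> \<open>Y \<noteq> 0\<close>] by blast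
  then show False
    using \<open>\<not> x dvd 1\<close> by (simp add: associated_def)
qed

lemma gcd_domain_sqf_square_two_power_associated:
  fixes x y X Y :: "'a::idom"
  assumes G: "gcd_domain TYPE('a)" and "sqf x" and "sqf y" and "\<not> x dvd 1" and "\<not> y dvd 1"
    and "X \<noteq> 0" and "Y \<noteq> 0" and assoc: "associated ((x * X\<^sup>2) ^ 2 ^ a) ((y * Y\<^sup>2) ^ 2 ^ b)"
  shows "a = b \<and> associated x y \<and> associated X Y"
proof -
  have "x * X\<^sup>2 \<noteq> 0" "y * Y\<^sup>2 \<noteq> 0"
    using assms(2,3,6,7) by (simp_all add: sqf_nonzero)
  then have "\<not> a < b" "\<not> b < a"
    using gcd_domain_sqf_square_two_power_less_not_associated[OF G] assms(2-7)
      assoc associated_sym by blast+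
  then have "a = b"
    by simp
  then have "associated (x * X\<^sup>2) (y * Y\<^sup>2)"
    using gcd_domain_associated_two_power_root[OF G] \<open>x * X\<^sup>2 \<noteq> 0\<close> \<open>y * Y\<^sup>2 \<noteq> 0\<close> assoc
    by blast
  then show ?thesis
    using gcd_domain_sqf_mult_square_associated[OF G] assms(2,3,6,7) \<open>a = b\<close> by blast
qed

lemma prod_two_powers_split_first:
  fixes f :: "nat \<Rightarrow> 'a::comm_semiring_1" and e :: "nat \<Rightarrow> nat"
  assumes "strict_mono_on {1..Suc n} e"
  shows "(\<Prod>i=1..Suc n. f i ^ 2 ^ e i)
    = (f 1 * (\<Prod>i=1..n. f (Suc i) ^ 2 ^ (e (Suc i) - Suc (e 1)))\<^sup>2) ^ 2 ^ e 1"
proof -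
  have exp: "f (Suc i) ^ 2 ^ e (Suc i) = (f (Suc i) ^ 2 ^ (e (Suc i) - Suc (e 1))) ^ 2 ^ Suc (e 1)"
    if "i \<in> {1..n}" for i
  proof -
    have "e 1 < e (Suc i)"
      using assms that by (auto simp: strict_mono_on_def)
    then have "e (Suc i) = (e (Suc i) - Suc (e 1)) + Suc (e 1)"
      by simp
    then show ?thesis
      by (metis power_add power_mult)
  qed
  have "(\<Prod>i=1..Suc n. f i ^ 2 ^ e i) = f 1 ^ 2 ^ e 1 * (\<Prod>i=Suc 1..Suc n. f i ^ 2 ^ e i)"
    by (rule prod.atLeast_Suc_atMost) simp
  also have "(\<Prod>i=Suc 1..Suc n. f i ^ 2 ^ e i) = (\<Prod>i=1..n. f (Suc i) ^ 2 ^ e (Suc i))"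
    by (rule prod.shift_bounds_cl_Suc_ivl)
  also have "\<dots> = (\<Prod>i=1..n. f (Suc i) ^ 2 ^ (e (Suc i) - Suc (e 1))) ^ 2 ^ Suc (e 1)"
    unfolding prod_power_distrib by (rule prod.cong) (simp_all add: exp)
  finally show ?thesis
    by (simp add: power_mult_distrib power_mult[symmetric])
qed

lemma prod_two_powers_not_unit:
  fixes f :: "nat \<Rightarrow> 'a::comm_semiring_1"
  assumes "\<not> f 1 dvd 1" and "n \<ge> 1"
  shows "\<not> (\<Prod>i=1..n. f i ^ 2 ^ e i) dvd 1"
proof
  have "f 1 dvd f 1 ^ 2 ^ e 1"
    by (simp add: dvd_power)
  also have "\<dots> dvd (\<Prod>i=1..n. f i ^ 2 ^ e i)"
    using assms(2) by (intro dvd_prodI) auto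
  also assume "\<dots> dvd 1"
  finally show False
    using assms(1) by blast
qed

lemma strict_mono_on_shift_down:
  assumes "strict_mono_on {1..Suc n} e"
  shows "strict_mono_on {1..n} (\<lambda>i. e (Suc i) - Suc (e 1))"
proof (rule strict_mono_onI)
  fix i j :: nat assume "i \<in> {1..n}" "j \<in> {1..n}" "i < j"
  then have "e 1 < e (Suc i)" "e (Suc i) < e (Suc j)"
    using assms by (auto simp: strict_mono_on_def)
  then show "e (Suc i) - Suc (e 1) < e (Suc j) - Suc (e 1)"
    by simp
qed

lemma gcd_domain_prod_sqf_two_powers_associated_first:
  fixes s t :: "nat \<Rightarrow> 'a::idom" and k l :: "nat \<Rightarrow> nat"
  assumes G: "gcd_domain TYPE('a)"
    and S: "\<forall>i\<in>{1..Suc n}. sqf (s i) \<and> \<not> s i dvd 1"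
    and T: "\<forall>j\<in>{1..Suc m}. sqf (t j) \<and> \<not> t j dvd 1"
    and "strict_mono_on {1..Suc n} k" and "strict_mono_on {1..Suc m} l"
    and "associated (\<Prod>i=1..Suc n. s i ^ 2 ^ k i) (\<Prod>j=1..Suc m. t j ^ 2 ^ l j)"
  shows "k 1 = l 1 \<and> associated (s 1) (t 1) \<and>
    associated (\<Prod>i=1..n. s (Suc i) ^ 2 ^ (k (Suc i) - Suc (k 1)))
      (\<Prod>i=1..m. t (Suc i) ^ 2 ^ (l (Suc i) - Suc (l 1)))"
proof -
  define Q where "Q = (\<Prod>i=1..n. s (Suc i) ^ 2 ^ (k (Suc i) - Suc (k 1)))"
  define R where "R = (\<Prod>i=1..m. t (Suc i) ^ 2 ^ (l (Suc i) - Suc (l 1)))"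
  have "Q \<noteq> 0" "R \<noteq> 0"
    using S T sqf_nonzero by (fastforce simp: Q_def R_def prod_zero_iff)+
  have "(\<Prod>i=1..Suc n. s i ^ 2 ^ k i) = (s 1 * Q\<^sup>2) ^ 2 ^ k 1"
    "(\<Prod>j=1..Suc m. t j ^ 2 ^ l j) = (t 1 * R\<^sup>2) ^ 2 ^ l 1"
    unfolding Q_def R_def using assms(4,5) by (simp_all only: prod_two_powers_split_first)
  then have "associated ((s 1 * Q\<^sup>2) ^ 2 ^ k 1) ((t 1 * R\<^sup>2) ^ 2 ^ l 1)"
    using assms(6) by simp
  moreover have "sqf (s 1)" "\<not> s 1 dvd 1" "sqf (t 1)" "\<not> t 1 dvd 1"
    using S T by auto
  ultimately show ?thesis
    using gcd_domain_sqf_square_two_power_associated[OF G] \<open>Q \<noteq> 0\<close> \<open>R \<noteq> 0\<close>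
    unfolding Q_def R_def by blast
qed

lemma gcd_domain_prod_sqf_two_powers_associated:
  fixes s t :: "nat \<Rightarrow> 'a::idom" and k l :: "nat \<Rightarrow> nat"
  assumes G: "gcd_domain TYPE('a)"
    and "\<forall>i\<in>{1..n}. sqf (s i) \<and> \<not> s i dvd 1"
    and "\<forall>j\<in>{1..m}. sqf (t j) \<and> \<not> t j dvd 1"
    and "strict_mono_on {1..n} k" and "strict_mono_on {1..m} l"
    and "associated (\<Prod>i=1..n. s i ^ 2 ^ k i) (\<Prod>j=1..m. t j ^ 2 ^ l j)"
  shows "n = m \<and> (\<forall>i\<in>{1..n}. associated (s i) (t i) \<and> k i = l i)"
  using assms(2-6)
proof (induction n arbitrary: m s t k l)
  case 0
  then have "(\<Prod>j=1..m. t j ^ 2 ^ l j) dvd 1"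
    using associated_is_unit by fastforce
  then have "m = 0"
    using prod_two_powers_not_unit[of t m l] "0.prems"(2) by fastforce
  then show ?case
    by simp
next
  case (Suc n)
  have "m \<noteq> 0"
  proof
    assume "m = 0"
    then have "(\<Prod>i=1..Suc n. s i ^ 2 ^ k i) dvd 1"
      using Suc.prems(5) associated_is_unit associated_sym by fastforce
    then show False
      using prod_two_powers_not_unit[of s "Suc n" k] Suc.prems(1) by auto
  qed
  then obtain m' where m: "m = Suc m'"
    using not0_implies_Suc by blast
  have first: "k 1 = l 1 \<and> associated (s 1) (t 1) \<and>
      associated (\<Prod>i=1..n. s (Suc i) ^ 2 ^ (k (Suc i) - Suc (k 1)))
        (\<Prod>i=1..m'. t (Suc i) ^ 2 ^ (l (Suc i) - Suc (l 1)))"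
    using gcd_domain_prod_sqf_two_powers_associated_first[OF G] Suc.prems unfolding m .
  have rest: "n = m' \<and> (\<forall>i\<in>{1..n}. associated (s (Suc i)) (t (Suc i))
      \<and> k (Suc i) - Suc (k 1) = l (Suc i) - Suc (l 1))"
    using Suc.IH[where s="\<lambda>i. s (Suc i)" and t="\<lambda>i. t (Suc i)" and m=m'
        and k="\<lambda>i. k (Suc i) - Suc (k 1)" and l="\<lambda>i. l (Suc i) - Suc (l 1)"] Suc.prems(1,2) m first
      strict_mono_on_shift_down[OF Suc.prems(3)] strict_mono_on_shift_down[OF Suc.prems(4)[unfolded m]]
    by auto
  have "associated (s i) (t i) \<and> k i = l i" if i: "i \<in> {1..Suc n}" for i
  proof (cases "i = 1")
    case True
    then show ?thesis
      using first by simp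
  next
    case False
    then obtain j where j: "i = Suc j" "j \<in> {1..n}"
      using i by (cases i) auto
    have "k 1 < k i" and "l 1 < l i"
      using Suc.prems(3,4) m rest j by (auto simp: strict_mono_on_def)
    moreover have "associated (s i) (t i)" and "k i - Suc (k 1) = l i - Suc (l 1)"
      using rest j by simp_all
    ultimately show ?thesis
      using first by simp
  qed
  then show ?case
    using rest m by simp
qed

theorem proposition2:
  fixes s t :: "nat \<Rightarrow> 'a::idom" and k l :: "nat \<Rightarrow> nat"
    and n m :: nat and c d :: 'a
  assumes "gcd_domain TYPE('a)"
    and "n \<ge> 1" and "m \<ge> 1"
    and "\<forall>i\<in>{1..n}. sqf (s i) \<and> \<not> s i dvd 1"
    and "\<forall>j\<in>{1..m}. sqf (t j) \<and> \<not> t j dvd 1"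
    and "\<forall>i\<in>{1..n}. \<forall>i'\<in>{1..n}. i < i' \<longrightarrow> k i < k i'"
    and "\<forall>j\<in>{1..m}. \<forall>j'\<in>{1..m}. j < j' \<longrightarrow> l j < l j'"
    and "c dvd 1" and "d dvd 1"
    and "c * (\<Prod>i=1..n. s i ^ (2 ^ k i)) = d * (\<Prod>j=1..m. t j ^ (2 ^ l j))"
  shows "n = m \<and> (\<forall>i\<in>{1..n}. associated (s i) (t i) \<and> k i = l i)"
proof -
  have "associated (\<Prod>i=1..n. s i ^ 2 ^ k i) (c * (\<Prod>i=1..n. s i ^ 2 ^ k i))"
    using associated_unit_mult[OF assms(8)] by (rule associated_sym)
  also have "c * (\<Prod>i=1..n. s i ^ 2 ^ k i) = d * (\<Prod>j=1..m. t j ^ 2 ^ l j)"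
    by (fact assms(10))
  finally have "associated (\<Prod>i=1..n. s i ^ 2 ^ k i) (\<Prod>j=1..m. t j ^ 2 ^ l j)"
    using associated_unit_mult[OF assms(9)] associated_trans by blast
  moreover have "strict_mono_on {1..n} k" "strict_mono_on {1..m} l"
    using assms(6,7) by (auto simp: strict_mono_on_def)
  ultimately show ?thesis
    using gcd_domain_prod_sqf_two_powers_associated[OF assms(1,4,5)] by blast
qed

end
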